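(* Fix $t_0>0$ and $c\ge 0$. Let $(\ell_n)$ be a sequence of min histories on $[t_0,\infty)$ with associated traces $A_n$ satisfying $\sup_n \bar A_n(q)<\infty$ for every $q\in(c,\infty)$, where $\bar A_n(q)=\int_0^\infty e^{-q\tau}A_n(d\tau)$. Then there is a min history $\ell$ such that $\ell_n(t)\to\ell(t)$ as $n\to\infty$ at all points of continuity $t$ of $\ell$ if and only if there is a trace $A$ associated to $\ell$ such that $\bar A_n(q)\to\bar A(q)$ as $n\to\infty$ for all $q\in(c,\infty)$.
   Context: A distribution function on an interval is a right-continuous nondecreasing real function, identified with the measure $A((x_1,x_2])=A(x_2)-A(x_1)$. A min history on $[t_0,\infty)$ is a positive distribution function $\ell$ on $[t_0,\infty)$ with $\ell(t)\to\infty$ as $t\to\infty$; its associated trace is $A(\tau)=\log\ell^\dagger(\tau)$ for $\tau>0$, where $\ell^\dagger(\tau)=\inf\{t\ge t_0:\ell(t)>\tau\}$. A trace is a distribution function $A$ on $(0,\infty)$ such that $A(\tau)=\log t_0$ on some nonempty maximal interval $(0,\tau_0)$ and $A(\tau)\to\infty$ as $\tau\to\infty$; its associated min history is $\ell(t)=\inf\{\tau>0:e^{A(\tau)}>t\}$. *)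

theory Defs
  imports "HOL-Analysis.Analysis"
begin

definition dist_fun_on :: "real set \<Rightarrow> (real \<Rightarrow> real) \<Rightarrow> bool" where
  "dist_fun_on I F \<longleftrightarrow> mono_on I F \<and> (\<forall>x\<in>I. continuous (at x within ({x..} \<inter> I)) F)"

definition min_history :: "real \<Rightarrow> (real \<Rightarrow> real) \<Rightarrow> bool" where
  "min_history t0 l \<longleftrightarrow> dist_fun_on {t0..} l \<and> (\<forall>t\<ge>t0. l t > 0) \<and> filterlim l at_top at_top"

definition l_dagger :: "real \<Rightarrow> (real \<Rightarrow> real) \<Rightarrow> real \<Rightarrow> real" where
  "l_dagger t0 l \<tau> = Inf {t. t \<ge> t0 \<and> l t > \<tau>}"

text \<open>The trace associated to a min history (meaningful for tau > 0).\<close>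
definition trace_of :: "real \<Rightarrow> (real \<Rightarrow> real) \<Rightarrow> real \<Rightarrow> real" where
  "trace_of t0 l \<tau> = ln (l_dagger t0 l \<tau>)"

definition is_trace :: "real \<Rightarrow> (real \<Rightarrow> real) \<Rightarrow> bool" where
  "is_trace t0 A \<longleftrightarrow> dist_fun_on {0<..} A \<and>
     (\<exists>\<tau>0>0. \<forall>\<tau>\<in>{0<..<\<tau>0}. A \<tau> = ln t0) \<and> filterlim A at_top at_top"

definition min_history_of :: "(real \<Rightarrow> real) \<Rightarrow> real \<Rightarrow> real" where
  "min_history_of A t = Inf {\<tau>. \<tau> > 0 \<and> exp (A \<tau>) > t}"

text \<open>Lebesgue--Stieltjes measure of a trace A with base value log t0, as a measure on the reals
  (A is extended by log t0 to (-infinity, 0], so the measure gives no mass to (-infinity,0]).\<close>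
definition trace_measure :: "real \<Rightarrow> (real \<Rightarrow> real) \<Rightarrow> real measure" where
  "trace_measure t0 A = interval_measure (\<lambda>\<tau>. if \<tau> \<le> 0 then ln t0 else A \<tau>)"

definition laplace_trace :: "real \<Rightarrow> (real \<Rightarrow> real) \<Rightarrow> real \<Rightarrow> ennreal" where
  "laplace_trace t0 A q = (\<integral>\<^sup>+ \<tau>\<in>{0<..}. ennreal (exp (- q * \<tau>)) \<partial>trace_measure t0 A)"

end

theory Submission
  imports Defs
begin

text \<open>The trace is the logarithm of the right-continuous inverse of the min history, and convergence
  at continuity points passes back and forth between monotone functions and their inverses, so both
  sides of the equivalence are statements about the traces \<open>A\<^sub>n\<close>. By Fubini,
  \<open>Abar(q)\<close> is \<open>q\<close> times the integral of \<open>exp (- q * s) * (A s - ln t0)\<close> over \<open>s > 0\<close>.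
  If the traces converge at continuity points, the uniform bound on \<open>Abar\<^sub>n(q')\<close> at some
  \<open>c < q' < q\<close> dominates the integrands by a multiple of \<open>exp (- (q - q') * s)\<close>, and dominated
  convergence applies. Conversely, convergence of the transforms at \<open>q + k\<close> for all \<open>k \<in> \<nat>\<close> is
  convergence of the integrals against \<open>exp (- q * s) * p (exp (- s))\<close> for all polynomials \<open>p\<close>,
  hence, by Weierstrass, for all continuous \<open>p\<close>; a tent \<open>p\<close> supported in
  \<open>(exp (- \<tau>2), exp (- \<tau>1))\<close> then traps \<open>A\<^sub>n\<close> between values of \<open>A\<close> at
  \<open>\<tau>1\<close> and \<open>\<tau>2\<close>.\<close>

section \<open>Min histories and their inverses\<close>

lemma min_history_mono: "min_history t0 l \<Longrightarrow> t0 \<le> s \<Longrightarrow> s \<le> t \<Longrightarrow> l s \<le> l t"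
  unfolding min_history_def dist_fun_on_def mono_on_def by auto

lemma min_history_mono_on: "min_history t0 l \<Longrightarrow> mono_on {t0<..} l"
  unfolding min_history_def dist_fun_on_def by (auto intro: mono_on_subset)

lemma min_history_pos: "min_history t0 l \<Longrightarrow> t0 \<le> t \<Longrightarrow> 0 < l t"
  unfolding min_history_def by auto

lemma min_history_right_cont:
  assumes "min_history t0 l" "t0 \<le> t" "0 < e"
  obtains d where "0 < d" "\<And>s. t \<le> s \<Longrightarrow> s < t + d \<Longrightarrow> l s < l t + e"
proof -
  have "continuous (at t within ({t..} \<inter> {t0..})) l"
    using assms unfolding min_history_def dist_fun_on_def by auto
  then obtain d where "0 < d" and d: "\<forall>s\<in>{t..} \<inter> {t0..}. dist s t < d \<longrightarrow> dist (l s) (l t) < e"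
    using assms(3) unfolding continuous_within_eps_delta by blast
  moreover have "l s < l t + e" if "t \<le> s" "s < t + d" for s
    using d[rule_format, of s] that assms(2) by (auto simp: dist_real_def)
  ultimately show thesis using that by blast
qed

lemma min_history_exceeds:
  assumes "min_history t0 l"
  shows "\<exists>t\<ge>t0. \<tau> < l t"
proof -
  obtain N where "\<And>t. N \<le> t \<Longrightarrow> \<tau> < l t"
    using assms unfolding min_history_def filterlim_at_top_dense eventually_at_top_linorder
    by blast
  then show ?thesis by (intro exI[of _ "max N t0"]) auto
qed

lemma t0_le_l_dagger: "min_history t0 l \<Longrightarrow> t0 \<le> l_dagger t0 l \<tau>"
  unfolding l_dagger_def using min_history_exceeds[of t0 l \<tau>] by (intro cInf_greatest) auto

lemma l_dagger_le: "min_history t0 l \<Longrightarrow> t0 \<le> t \<Longrightarrow> \<tau> < l t \<Longrightarrow> l_dagger t0 l \<tau> \<le> t"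
  unfolding l_dagger_def by (intro cInf_lower) (auto intro: bdd_belowI[of _ t0])

lemma l_dagger_less_imp_less:
  assumes "min_history t0 l" "l_dagger t0 l \<tau> < t"
  shows "\<tau> < l t"
proof -
  obtain s where "t0 \<le> s" "\<tau> < l s" "s < t"
    using assms(2) min_history_exceeds[OF assms(1), of \<tau>] unfolding l_dagger_def
    by (subst (asm) cInf_less_iff) (auto intro: bdd_belowI[of _ t0])
  then show ?thesis using min_history_mono[OF assms(1), of s t] by auto
qed

lemma le_l_dagger:
  assumes "min_history t0 l" "t0 \<le> t" "l t \<le> \<tau>"
  shows "t \<le> l_dagger t0 l \<tau>"
  unfolding l_dagger_def using min_history_exceeds[OF assms(1), of \<tau>]
proof (intro cInf_greatest)
  show "t \<le> s" if "s \<in> {t. t0 \<le> t \<and> \<tau> < l t}" for s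
    using that assms min_history_mono[OF assms(1), of s t] by force
qed auto

lemma l_dagger_mono: "min_history t0 l \<Longrightarrow> \<tau> \<le> \<tau>' \<Longrightarrow> l_dagger t0 l \<tau> \<le> l_dagger t0 l \<tau>'"
  unfolding l_dagger_def using min_history_exceeds[of t0 l \<tau>']
  by (intro cInf_superset_mono) (auto intro: bdd_belowI[of _ t0])

lemma l_dagger_continuous_from_right:
  assumes "min_history t0 l"
  shows "continuous (at \<tau> within {\<tau>..}) (l_dagger t0 l)"
  unfolding continuous_within_eps_delta
proof (intro allI impI)
  fix e :: real assume "0 < e"
  then have "l_dagger t0 l \<tau> < l_dagger t0 l \<tau> + e" by simp
  then obtain t where t: "\<tau> < l t" "t < l_dagger t0 l \<tau> + e" "t0 \<le> t"
    using min_history_exceeds[OF assms, of \<tau>] unfolding l_dagger_def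
    by (subst (asm) cInf_less_iff) (auto intro: bdd_belowI[of _ t0])
  have "dist (l_dagger t0 l \<tau>') (l_dagger t0 l \<tau>) < e" if "\<tau>' \<in> {\<tau>..}" "dist \<tau>' \<tau> < l t - \<tau>" for \<tau>'
    using that l_dagger_le[OF assms t(3), of \<tau>'] l_dagger_mono[OF assms, of \<tau> \<tau>'] t(2)
    by (auto simp: dist_real_def)
  with t(1) show "\<exists>d>0. \<forall>\<tau>'\<in>{\<tau>..}. dist \<tau>' \<tau> < d \<longrightarrow> dist (l_dagger t0 l \<tau>') (l_dagger t0 l \<tau>) < e"
    by (intro exI[of _ "l t - \<tau>"]) auto
qed

lemma l_dagger_at_top: "min_history t0 l \<Longrightarrow> filterlim (l_dagger t0 l) at_top at_top"
  unfolding filterlim_at_top eventually_at_top_linorder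
proof (intro allI exI[of _ "l (max _ t0)"] allI impI)
  fix Z \<tau> assume "min_history t0 l" "l (max Z t0) \<le> \<tau>"
  then have "max Z t0 \<le> l_dagger t0 l \<tau>" by (intro le_l_dagger) auto
  then show "Z \<le> l_dagger t0 l \<tau>" by simp
qed

lemma trace_of_is_trace:
  assumes "min_history t0 l" "0 < t0"
  shows "is_trace t0 (trace_of t0 l)"
  unfolding is_trace_def dist_fun_on_def
proof (intro conjI ballI)
  have pos: "0 < l_dagger t0 l \<tau>" for \<tau>
    using t0_le_l_dagger[OF assms(1)] assms(2) by (meson less_le_trans)
  show "mono_on {0<..} (trace_of t0 l)"
    unfolding trace_of_def by (intro mono_onI) (use pos l_dagger_mono[OF assms(1)] in auto)
  show "continuous (at x within ({x..} \<inter> {0<..})) (trace_of t0 l)" for x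
  proof -
    have "continuous (at x within ({x..} \<inter> {0<..})) (l_dagger t0 l)"
      by (rule continuous_within_subset[OF l_dagger_continuous_from_right[OF assms(1)]]) auto
    then show ?thesis
      unfolding trace_of_def[abs_def]
      by (rule continuous_within_compose3[where g=ln and f="l_dagger t0 l", OF isCont_ln_pos[OF pos]])
  qed
  show "\<exists>\<tau>0>0. \<forall>\<tau>\<in>{0<..<\<tau>0}. trace_of t0 l \<tau> = ln t0"
  proof (intro exI[of _ "l t0"] conjI ballI)
    fix \<tau> assume "\<tau> \<in> {0<..<l t0}"
    then have "l_dagger t0 l \<tau> = t0"
      using l_dagger_le[OF assms(1) order_refl, of \<tau>] t0_le_l_dagger[OF assms(1), of \<tau>] by simp
    then show "trace_of t0 l \<tau> = ln t0" by (simp add: trace_of_def)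
  qed (use min_history_pos[OF assms(1) order_refl] in simp)
  show "filterlim (trace_of t0 l) at_top at_top"
    unfolding trace_of_def[abs_def] by (rule filterlim_compose[OF ln_at_top l_dagger_at_top[OF assms(1)]])
qed

lemma exp_trace_of: "min_history t0 l \<Longrightarrow> 0 < t0 \<Longrightarrow> exp (trace_of t0 l \<tau>) = l_dagger t0 l \<tau>"
  using t0_le_l_dagger[of t0 l \<tau>] by (simp add: trace_of_def)

lemma min_history_of_trace_of:
  assumes "min_history t0 l" "0 < t0" "t0 \<le> t"
  shows "min_history_of (trace_of t0 l) t = l t"
proof -
  let ?S = "{\<tau>. 0 < \<tau> \<and> t < l_dagger t0 l \<tau>}"
  have "{\<tau>. 0 < \<tau> \<and> t < exp (trace_of t0 l \<tau>)} = ?S"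
    using exp_trace_of[OF assms(1,2)] by simp
  then have eq: "min_history_of (trace_of t0 l) t = Inf ?S"
    by (simp add: min_history_of_def)
  have lt: "0 < l t" using min_history_pos[OF assms(1,3)] .
  \<comment> \<open>right continuity of l at t pushes l_dagger (l t + e) strictly beyond t\<close>
  have mem: "l t + e \<in> ?S" if e: "0 < e" for e
  proof -
    obtain d where "0 < d" and d: "\<And>s. t \<le> s \<Longrightarrow> s < t + d \<Longrightarrow> l s < l t + e"
      using min_history_right_cont[OF assms(1,3) e] by blast
    have "t + d \<le> l_dagger t0 l (l t + e)"
      unfolding l_dagger_def
    proof (rule cInf_greatest)
      show "{s. t0 \<le> s \<and> l t + e < l s} \<noteq> {}" using min_history_exceeds[OF assms(1)] by auto
      show "t + d \<le> s" if s: "s \<in> {s. t0 \<le> s \<and> l t + e < l s}" for s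
      proof (rule ccontr)
        assume "\<not> t + d \<le> s"
        then show False
          using s d[of s] min_history_mono[OF assms(1), of s t] e by (cases "t \<le> s") auto
      qed
    qed
    then show ?thesis using lt \<open>0 < e\<close> \<open>0 < d\<close> by auto
  qed
  have "l t \<le> Inf ?S"
  proof (rule cInf_greatest)
    show "l t \<le> \<tau>" if "\<tau> \<in> ?S" for \<tau>
      using that l_dagger_le[OF assms(1,3), of \<tau>] by (cases "\<tau> < l t") auto
  qed (use mem[of 1] in auto)
  moreover have "Inf ?S \<le> l t"
  proof (rule field_le_epsilon)
    show "Inf ?S \<le> l t + e" if "0 < e" for e
      using mem[OF that] by (intro cInf_lower) (auto intro: bdd_belowI[of _ 0])
  qed
  ultimately show ?thesis unfolding eq by simp
qed

section \<open>Traces\<close>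

lemma trace_mono_on: "is_trace t0 A \<Longrightarrow> mono_on {0<..} A"
  unfolding is_trace_def dist_fun_on_def by auto

lemma trace_mono: "is_trace t0 A \<Longrightarrow> 0 < x \<Longrightarrow> x \<le> y \<Longrightarrow> A x \<le> A y"
  using trace_mono_on[of t0 A] unfolding mono_on_def by auto

lemma trace_base:
  assumes "is_trace t0 A"
  obtains \<tau>0 where "0 < \<tau>0" "\<And>\<tau>. 0 < \<tau> \<Longrightarrow> \<tau> < \<tau>0 \<Longrightarrow> A \<tau> = ln t0"
  using assms unfolding is_trace_def by auto

lemma trace_ge_ln:
  assumes "is_trace t0 A" "0 < \<tau>"
  shows "ln t0 \<le> A \<tau>"
proof -
  obtain \<tau>0 where "0 < \<tau>0" and base: "\<And>\<tau>. 0 < \<tau> \<Longrightarrow> \<tau> < \<tau>0 \<Longrightarrow> A \<tau> = ln t0"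
    using trace_base[OF assms(1)] by blast
  then have "A (min \<tau> (\<tau>0 / 2)) = ln t0" using assms(2) by simp
  moreover have "A (min \<tau> (\<tau>0 / 2)) \<le> A \<tau>"
    using trace_mono[OF assms(1)] assms(2) \<open>0 < \<tau>0\<close> by simp
  ultimately show ?thesis by simp
qed

lemma trace_exceeds:
  assumes "is_trace t0 A"
  shows "\<exists>\<tau>>0. t < exp (A \<tau>)"
proof -
  obtain N where N: "\<And>\<tau>. N \<le> \<tau> \<Longrightarrow> ln (max t 1) < A \<tau>"
    using assms unfolding is_trace_def filterlim_at_top_dense eventually_at_top_linorder by blast
  have "t \<le> exp (ln (max t 1))" by simp
  also have "\<dots> < exp (A (max N 1))" using N[of "max N 1"] by (intro exp_less_mono) simp
  finally have "t < exp (A (max N 1))" .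
  moreover have "0 < max N 1" by simp
  ultimately show ?thesis by blast
qed

lemma min_history_of_le: "0 < \<tau> \<Longrightarrow> t < exp (A \<tau>) \<Longrightarrow> min_history_of A t \<le> \<tau>"
  unfolding min_history_of_def by (intro cInf_lower) (auto intro: bdd_belowI[of _ 0])

lemma min_history_of_less_imp:
  assumes "is_trace t0 A" "min_history_of A t < \<tau>"
  shows "0 < \<tau> \<and> t < exp (A \<tau>)"
proof -
  obtain s where "0 < s" "t < exp (A s)" "s < \<tau>"
    using assms(2) trace_exceeds[OF assms(1), of t] unfolding min_history_of_def
    by (subst (asm) cInf_less_iff) (auto intro: bdd_belowI[of _ 0])
  then show ?thesis using trace_mono[OF assms(1), of s \<tau>] by (auto intro: less_le_trans)
qed

lemma min_history_of_pos:
  assumes "is_trace t0 A" "0 < t0" "t0 < t"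
  shows "0 < min_history_of A t"
proof -
  obtain \<tau>0 where "0 < \<tau>0" and base: "\<And>\<tau>. 0 < \<tau> \<Longrightarrow> \<tau> < \<tau>0 \<Longrightarrow> A \<tau> = ln t0"
    using trace_base[OF assms(1)] by blast
  have "\<tau>0 \<le> min_history_of A t"
    unfolding min_history_of_def
  proof (rule cInf_greatest)
    show "{\<tau>. 0 < \<tau> \<and> t < exp (A \<tau>)} \<noteq> {}" using trace_exceeds[OF assms(1)] by simp
    show "\<tau>0 \<le> \<tau>" if "\<tau> \<in> {\<tau>. 0 < \<tau> \<and> t < exp (A \<tau>)}" for \<tau>
      using that base[of \<tau>] assms by (cases "\<tau> < \<tau>0") auto
  qed
  with \<open>0 < \<tau>0\<close> show ?thesis by simp
qed

section \<open>The Laplace--Stieltjes transform of a trace\<close>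

definition trace_excess :: "real \<Rightarrow> (real \<Rightarrow> real) \<Rightarrow> real \<Rightarrow> real" where
  "trace_excess t0 A \<tau> = (if \<tau> \<le> 0 then 0 else A \<tau> - ln t0)"

lemma trace_excess_nonneg: "is_trace t0 A \<Longrightarrow> 0 \<le> trace_excess t0 A \<tau>"
  using trace_ge_ln[of t0 A \<tau>] by (simp add: trace_excess_def)

lemma trace_excess_mono: "is_trace t0 A \<Longrightarrow> mono (trace_excess t0 A)"
  unfolding mono_def trace_excess_def
  using trace_ge_ln[of t0 A] trace_mono[of t0 A] by force

lemma borel_measurable_trace_excess: "is_trace t0 A \<Longrightarrow> trace_excess t0 A \<in> borel_measurable borel"
  by (rule borel_measurable_mono[OF trace_excess_mono])

lemma trace_excess_right_cont:
  assumes "is_trace t0 A"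
  shows "continuous (at_right x) (trace_excess t0 A)"
proof (cases "0 < x")
  case True
  have "continuous (at x within ({x..} \<inter> {0<..})) A"
    using assms True unfolding is_trace_def dist_fun_on_def by auto
  then have "continuous (at_right x) A"
    by (rule continuous_within_subset) (use True in auto)
  then have cont: "continuous (at_right x) (\<lambda>\<tau>. A \<tau> - ln t0)"
    by (intro continuous_intros)
  have ev: "eventually (\<lambda>\<tau>. trace_excess t0 A \<tau> = A \<tau> - ln t0) (at_right x)"
    by (rule eventually_mono[OF eventually_at_right_less]) (use True in \<open>simp add: trace_excess_def\<close>)
  have "trace_excess t0 A x = A x - ln t0" using True by (simp add: trace_excess_def)
  from continuous_at_within_cong[OF this ev] cont show ?thesis by (rule iffD2)
next
  case False
  obtain \<tau>0 where "0 < \<tau>0" and base: "\<And>\<tau>. 0 < \<tau> \<Longrightarrow> \<tau> < \<tau>0 \<Longrightarrow> A \<tau> = ln t0"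
    using trace_base[OF assms] by blast
  have "\<forall>\<tau>>x. \<tau> < \<tau>0 \<longrightarrow> trace_excess t0 A \<tau> = 0"
    using base by (simp add: trace_excess_def)
  moreover have "x < \<tau>0" using False \<open>0 < \<tau>0\<close> by simp
  ultimately have ev: "eventually (\<lambda>\<tau>. trace_excess t0 A \<tau> = 0) (at_right x)"
    unfolding eventually_at_right[OF \<open>x < \<tau>0\<close>] by blast
  have "trace_excess t0 A x = 0" using False by (simp add: trace_excess_def)
  from continuous_at_within_cong[OF this ev] show ?thesis by simp
qed

lemma trace_measure_eq: "trace_measure t0 A = interval_measure (\<lambda>\<tau>. trace_excess t0 A \<tau> + ln t0)"
  unfolding trace_measure_def trace_excess_def by (rule arg_cong[where f = interval_measure]) auto

lemma nn_integral_exp_tail: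
  fixes q \<tau> :: real
  assumes "0 < q"
  shows "(\<integral>\<^sup>+ s. ennreal (if \<tau> \<le> s then q * exp (- q * s) else 0) \<partial>lborel) = ennreal (exp (- q * \<tau>))"
proof -
  have "((\<lambda>s. q * exp (- q * s)) has_integral q * (exp (- q * \<tau>) / q)) {\<tau>..}"
    by (intro has_integral_mult_right has_integral_exp_minus_to_infinity assms)
  then have "(\<integral>\<^sup>+ s. indicator {\<tau>..} s * (q * exp (- q * s)) \<partial>lborel) = q * (exp (- q * \<tau>) / q)"
    by (intro nn_integral_has_integral_lebesgue) (use assms in auto)
  moreover have "(\<lambda>s. ennreal (if \<tau> \<le> s then q * exp (- q * s) else 0))
      = (\<lambda>s. indicator {\<tau>..} s * (q * exp (- q * s)))"
    by (auto simp: indicator_def)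
  ultimately show ?thesis using assms by simp
qed

text \<open>Fubini, after writing \<open>exp (- q * \<tau>)\<close> as the integral of \<open>q * exp (- q * s)\<close> over
  \<open>s \<ge> \<tau>\<close>: integrating over \<open>\<tau>\<close> first gives the mass \<open>A s - ln t0\<close> of \<open>(0, s]\<close>.\<close>
lemma laplace_trace_eq_nn_integral:
  assumes tr: "is_trace t0 A" and q: "0 < q"
  shows "laplace_trace t0 A q = (\<integral>\<^sup>+ s. ennreal (q * exp (- q * s) * trace_excess t0 A s) \<partial>lborel)"
proof -
  let ?F = "\<lambda>\<tau>. trace_excess t0 A \<tau> + ln t0"
  let ?M = "interval_measure ?F"
  have F: "\<And>x y. x \<le> y \<Longrightarrow> ?F x \<le> ?F y" "\<And>a. continuous (at_right a) ?F"
    using trace_excess_mono[OF tr] trace_excess_right_cont[OF tr]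
    by (auto simp: mono_def intro: continuous_intros)
  interpret M: sigma_finite_measure ?M
    by (rule sigma_finite_interval_measure[OF F])
  interpret pair_sigma_finite ?M lborel
    by unfold_locales
  let ?f = "\<lambda>\<tau> s. ennreal (if 0 < \<tau> \<and> \<tau> \<le> s then q * exp (- q * s) else 0)"
  have "laplace_trace t0 A q = (\<integral>\<^sup>+ \<tau>. ennreal (exp (- q * \<tau>)) * indicator {0<..} \<tau> \<partial>?M)"
    unfolding laplace_trace_def trace_measure_eq ..
  also have "\<dots> = (\<integral>\<^sup>+ \<tau>. (\<integral>\<^sup>+ s. ?f \<tau> s \<partial>lborel) \<partial>?M)"
    using nn_integral_exp_tail[OF q] by (intro nn_integral_cong) (auto simp: indicator_def)
  also have "\<dots> = (\<integral>\<^sup>+ s. (\<integral>\<^sup>+ \<tau>. ?f \<tau> s \<partial>?M) \<partial>lborel)"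
    by (rule Fubini'[symmetric]) measurable
  also have "\<dots> = (\<integral>\<^sup>+ s. ennreal (q * exp (- q * s) * trace_excess t0 A s) \<partial>lborel)"
  proof (rule nn_integral_cong)
    fix s :: real
    show "(\<integral>\<^sup>+ \<tau>. ?f \<tau> s \<partial>?M) = ennreal (q * exp (- q * s) * trace_excess t0 A s)"
    proof (cases "0 < s")
      case True
      have "(\<integral>\<^sup>+ \<tau>. ?f \<tau> s \<partial>?M) = (\<integral>\<^sup>+ \<tau>. ennreal (q * exp (- q * s)) * indicator {0<..s} \<tau> \<partial>?M)"
        by (intro nn_integral_cong) (auto simp: indicator_def)
      also have "\<dots> = ennreal (q * exp (- q * s)) * emeasure ?M {0<..s}"
        by (rule nn_integral_cmult_indicator) simp
      also have "emeasure ?M {0<..s} = ennreal (?F s - ?F 0)"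
        using True by (intro emeasure_interval_measure_Ioc F) auto
      finally show ?thesis
        using True q trace_excess_nonneg[OF tr, of s]
        by (simp add: trace_excess_def ennreal_mult[symmetric])
    next
      case False
      then have "\<And>\<tau>. ?f \<tau> s = 0" by auto
      then show ?thesis using False by (simp add: trace_excess_def)
    qed
  qed
  finally show ?thesis .
qed

lemma laplace_trace_ge:
  assumes tr: "is_trace t0 A" and q: "0 < q"
  shows "ennreal (trace_excess t0 A \<tau> * exp (- q * \<tau>)) \<le> laplace_trace t0 A q"
proof -
  have "ennreal (trace_excess t0 A \<tau> * exp (- q * \<tau>))
      = ennreal (trace_excess t0 A \<tau>) * (\<integral>\<^sup>+ s. ennreal (if \<tau> \<le> s then q * exp (- q * s) else 0) \<partial>lborel)"
    using trace_excess_nonneg[OF tr] by (simp add: ennreal_mult nn_integral_exp_tail[OF q])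
  also have "\<dots> = (\<integral>\<^sup>+ s. ennreal (trace_excess t0 A \<tau>) * ennreal (if \<tau> \<le> s then q * exp (- q * s) else 0) \<partial>lborel)"
    by (rule nn_integral_cmult[symmetric]) measurable
  also have "\<dots> \<le> (\<integral>\<^sup>+ s. ennreal (q * exp (- q * s) * trace_excess t0 A s) \<partial>lborel)"
  proof (rule nn_integral_mono)
    fix s :: real
    have "trace_excess t0 A \<tau> * (q * exp (- q * s)) \<le> q * exp (- q * s) * trace_excess t0 A s"
      if "\<tau> \<le> s"
      using monoD[OF trace_excess_mono[OF tr] that] q by (simp add: mult.commute)
    then show "ennreal (trace_excess t0 A \<tau>) * ennreal (if \<tau> \<le> s then q * exp (- q * s) else 0)
        \<le> ennreal (q * exp (- q * s) * trace_excess t0 A s)"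
      using trace_excess_nonneg[OF tr] q by (auto simp: ennreal_mult[symmetric] intro: ennreal_leI)
  qed
  also have "\<dots> = laplace_trace t0 A q" using laplace_trace_eq_nn_integral[OF tr q] by simp
  finally show ?thesis .
qed

lemma integrable_laplace_trace:
  assumes tr: "is_trace t0 A" and q: "0 < q" and fin: "laplace_trace t0 A q < \<infinity>"
  shows "integrable lborel (\<lambda>s. exp (- q * s) * trace_excess t0 A s)"
proof -
  have "integrable lborel (\<lambda>s. q * exp (- q * s) * trace_excess t0 A s)"
  proof (rule integrableI_nonneg)
    show "(\<lambda>s. q * exp (- q * s) * trace_excess t0 A s) \<in> borel_measurable lborel"
      using borel_measurable_trace_excess[OF tr] by simp
    show "AE s in lborel. 0 \<le> q * exp (- q * s) * trace_excess t0 A s"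
      using trace_excess_nonneg[OF tr] q by simp
  qed (use fin in \<open>simp add: laplace_trace_eq_nn_integral[OF tr q]\<close>)
  then have "integrable lborel (\<lambda>s. (1 / q) * (q * exp (- q * s) * trace_excess t0 A s))"
    by (rule integrable_mult_right)
  then show ?thesis using q by simp
qed

lemma laplace_trace_eq_integral:
  assumes tr: "is_trace t0 A" and q: "0 < q"
    and int: "integrable lborel (\<lambda>s. exp (- q * s) * trace_excess t0 A s)"
  shows "laplace_trace t0 A q = ennreal (q * (\<integral>s. exp (- q * s) * trace_excess t0 A s \<partial>lborel))"
proof -
  have "laplace_trace t0 A q = ennreal (\<integral>s. q * (exp (- q * s) * trace_excess t0 A s) \<partial>lborel)"
    unfolding laplace_trace_eq_nn_integral[OF tr q] mult.assoc
  proof (rule nn_integral_eq_integral)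
    show "integrable lborel (\<lambda>s. q * (exp (- q * s) * trace_excess t0 A s))"
      by (rule integrable_mult_right[OF int])
    show "AE s in lborel. 0 \<le> q * (exp (- q * s) * trace_excess t0 A s)"
      using trace_excess_nonneg[OF tr] q by simp
  qed
  then show ?thesis by simp
qed

section \<open>Convergence of transforms from convergence of traces\<close>

lemma integrable_exp_decay:
  fixes a :: real
  assumes "0 < a"
  shows "integrable lborel (\<lambda>s. indicator {0<..} s * exp (- a * s))"
proof -
  have "((\<lambda>s. exp (- a * s)) has_integral exp (- a * 0) / a) {0..}"
    by (rule has_integral_exp_minus_to_infinity[OF assms])
  then have "(\<integral>\<^sup>+ s. indicator {0..} s * exp (- a * s) \<partial>lborel) = exp (- a * 0) / a"
    by (intro nn_integral_has_integral_lebesgue) auto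
  then have "integrable lborel (\<lambda>s. indicator {0..} s * exp (- a * s))"
    by (intro integrableI_nonneg) auto
  then show ?thesis
    by (rule Bochner_Integration.integrable_bound) (auto simp: indicator_def)
qed

lemma trace_excess_le_exp:
  assumes "is_trace t0 A" "0 < q" "0 \<le> M" "laplace_trace t0 A q \<le> ennreal M"
  shows "trace_excess t0 A \<tau> \<le> M * exp (q * \<tau>)"
proof -
  have "ennreal (trace_excess t0 A \<tau> * exp (- q * \<tau>)) \<le> ennreal M"
    using laplace_trace_ge[OF assms(1,2)] assms(4) by (rule order_trans)
  then have "trace_excess t0 A \<tau> * exp (- q * \<tau>) * exp (q * \<tau>) \<le> M * exp (q * \<tau>)"
    using assms(3) by (intro mult_right_mono) (auto simp: ennreal_le_iff)
  then show ?thesis by (simp add: mult.assoc flip: exp_add)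
qed

lemma AE_trace_excess_tendsto:
  assumes tr: "is_trace t0 A"
    and pw: "\<And>\<tau>. 0 < \<tau> \<Longrightarrow> isCont A \<tau> \<Longrightarrow> (\<lambda>n. As n \<tau>) \<longlonglongrightarrow> A \<tau>"
  shows "AE s in lborel. (\<lambda>n. trace_excess t0 (As n) s) \<longlonglongrightarrow> trace_excess t0 A s"
proof (rule AE_I')
  have "countable {s\<in>{0<..}. \<not> isCont A s}"
    by (intro mono_on_ctble_discont_open trace_mono_on[OF tr]) auto
  then show "{s\<in>{0<..}. \<not> isCont A s} \<in> null_sets lborel"
    by (rule countable_imp_null_set_lborel)
  show "{s \<in> space lborel. \<not> (\<lambda>n. trace_excess t0 (As n) s) \<longlonglongrightarrow> trace_excess t0 A s}
      \<subseteq> {s\<in>{0<..}. \<not> isCont A s}"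
    using pw by (auto simp: trace_excess_def intro: tendsto_diff)
qed

text \<open>Dominated convergence, the bound at \<open>q' < q\<close> providing the dominating function.\<close>
lemma laplace_trace_tendsto:
  assumes trs: "\<And>n. is_trace t0 (As n)" and tr: "is_trace t0 A"
    and pw: "\<And>\<tau>. 0 < \<tau> \<Longrightarrow> isCont A \<tau> \<Longrightarrow> (\<lambda>n. As n \<tau>) \<longlonglongrightarrow> A \<tau>"
    and q': "0 < q'" "q' < q" and bdd: "(SUP n. laplace_trace t0 (As n) q') < \<infinity>"
  shows "(\<lambda>n. laplace_trace t0 (As n) q) \<longlonglongrightarrow> laplace_trace t0 A q"
proof -
  define M where "M = enn2real (SUP n. laplace_trace t0 (As n) q')"
  have "laplace_trace t0 (As n) q' \<le> (SUP n. laplace_trace t0 (As n) q')" for n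
    by (rule SUP_upper) simp
  also have "(SUP n. laplace_trace t0 (As n) q') = ennreal M"
    using bdd unfolding M_def by simp
  finally have le_M: "laplace_trace t0 (As n) q' \<le> ennreal M" for n .
  have bound: "trace_excess t0 (As n) s \<le> M * exp (q' * s)" for n s
    by (rule trace_excess_le_exp[OF trs q'(1) _ le_M]) (simp add: M_def)
  let ?g = "\<lambda>n s. exp (- q * s) * trace_excess t0 (As n) s"
  let ?f = "\<lambda>s. exp (- q * s) * trace_excess t0 A s"
  let ?w = "\<lambda>s. M * (indicator {0<..} s * exp (- (q - q') * s))"
  have dom: "norm (?g n s) \<le> ?w s" for n s
  proof -
    have "exp (- q * s) * trace_excess t0 (As n) s \<le> exp (- q * s) * (M * exp (q' * s))"
      using bound by (intro mult_left_mono) auto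
    also have "\<dots> = M * exp (- (q - q') * s)" by (simp add: algebra_simps flip: exp_add)
    finally show ?thesis
      using trace_excess_nonneg[OF trs] by (auto simp: trace_excess_def indicator_def)
  qed
  have "AE s in lborel. (\<lambda>n. trace_excess t0 (As n) s) \<longlonglongrightarrow> trace_excess t0 A s"
    by (rule AE_trace_excess_tendsto[OF tr pw])
  then have lim: "AE s in lborel. (\<lambda>n. ?g n s) \<longlonglongrightarrow> ?f s"
    by (rule AE_mp) (intro AE_I2 impI tendsto_mult_left)
  have wint: "integrable lborel ?w"
    using q' by (intro integrable_mult_right integrable_exp_decay) simp
  have meas: "?f \<in> borel_measurable lborel" "\<And>n. ?g n \<in> borel_measurable lborel"
    using borel_measurable_trace_excess[OF tr] borel_measurable_trace_excess[OF trs] by simp_all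
  note dc = integral_dominated_convergence[OF meas wint lim AE_I2[OF dom]]
    integrable_dominated_convergence[OF meas wint lim AE_I2[OF dom]]
    integrable_dominated_convergence2[OF meas wint lim AE_I2[OF dom]]
  have "(\<lambda>n. ennreal (q * (\<integral>s. ?g n s \<partial>lborel))) \<longlonglongrightarrow> ennreal (q * (\<integral>s. ?f s \<partial>lborel))"
    using dc(1) by (intro tendsto_ennrealI tendsto_mult_left)
  then show ?thesis
    using q' by (simp add: laplace_trace_eq_integral[OF trs _ dc(3)] laplace_trace_eq_integral[OF tr _ dc(2)])
qed

section \<open>Convergence of traces from convergence of transforms\<close>

lemma integrable_continuous_comp_mult:
  fixes \<phi> g :: "'a \<Rightarrow> real"
  assumes \<phi>: "\<phi> \<in> borel_measurable M" "\<And>x. \<phi> x \<in> {0..1}"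
    and f: "continuous_on {0..1} f" and g: "integrable M g"
  shows "integrable M (\<lambda>x. f (\<phi> x) * g x)"
proof -
  obtain K where K: "\<forall>y\<in>{0..1}. \<bar>f y\<bar> \<le> K"
    using compact_imp_bounded[OF compact_continuous_image[OF f compact_Icc]]
    unfolding bounded_iff by auto
  have clamp: "continuous_on UNIV (\<lambda>y. f (max 0 (min 1 y)))"
    by (rule continuous_on_compose2[OF f]) (auto intro!: continuous_intros)
  have "(\<lambda>x. f (\<phi> x)) = (\<lambda>x. f (max 0 (min 1 (\<phi> x))))"
    using \<phi>(2) by (intro ext) (simp add: max_absorb2 min_absorb2)
  then have "(\<lambda>x. f (\<phi> x)) \<in> borel_measurable M"
    using borel_measurable_continuous_on[OF clamp \<phi>(1)] by simp
  then have meas: "(\<lambda>x. f (\<phi> x) * g x) \<in> borel_measurable M"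
    using borel_measurable_integrable[OF g] by simp
  show ?thesis
  proof (rule Bochner_Integration.integrable_bound[OF integrable_mult_right[OF integrable_abs[OF g]] meas])
    show "AE x in M. norm (f (\<phi> x) * g x) \<le> norm (K * \<bar>g x\<bar>)"
    proof (intro AE_I2)
      fix x
      have "\<bar>f (\<phi> x)\<bar> \<le> \<bar>K\<bar>" using K \<phi>(2)[of x] by fastforce
      then show "norm (f (\<phi> x) * g x) \<le> norm (K * \<bar>g x\<bar>)"
        by (simp add: abs_mult mult_right_mono)
    qed
  qed
qed

lemma integral_polynomial_comp_mult:
  fixes \<phi> g :: "'a \<Rightarrow> real"
  assumes "\<And>i. integrable M (\<lambda>x. \<phi> x ^ i * g x)"
  shows "(\<integral>x. (\<Sum>i\<le>N. a i * \<phi> x ^ i) * g x \<partial>M) = (\<Sum>i\<le>N. a i * (\<integral>x. \<phi> x ^ i * g x \<partial>M))"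
proof -
  have "(\<integral>x. (\<Sum>i\<le>N. a i * \<phi> x ^ i) * g x \<partial>M) = (\<integral>x. (\<Sum>i\<le>N. a i * (\<phi> x ^ i * g x)) \<partial>M)"
    by (simp add: sum_distrib_right mult.assoc)
  also have "\<dots> = (\<Sum>i\<le>N. \<integral>x. a i * (\<phi> x ^ i * g x) \<partial>M)"
    by (rule Bochner_Integration.integral_sum) (intro integrable_mult_right assms)
  also have "\<dots> = (\<Sum>i\<le>N. a i * (\<integral>x. \<phi> x ^ i * g x \<partial>M))"
    by simp
  finally show ?thesis .
qed

lemma integral_continuous_comp_mult_diff_le:
  fixes \<phi> g :: "'a \<Rightarrow> real"
  assumes \<phi>: "\<phi> \<in> borel_measurable M" "\<And>x. \<phi> x \<in> {0..1}"
    and f: "continuous_on {0..1} f" and p: "continuous_on {0..1} p"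
    and close: "\<And>y. y \<in> {0..1} \<Longrightarrow> \<bar>f y - p y\<bar> \<le> \<epsilon>"
    and g: "integrable M g" "\<And>x. 0 \<le> g x"
  shows "\<bar>(\<integral>x. f (\<phi> x) * g x \<partial>M) - (\<integral>x. p (\<phi> x) * g x \<partial>M)\<bar> \<le> \<epsilon> * (\<integral>x. g x \<partial>M)"
proof -
  note int = integrable_continuous_comp_mult[OF \<phi> _ g(1)]
  have "\<bar>(\<integral>x. f (\<phi> x) * g x \<partial>M) - (\<integral>x. p (\<phi> x) * g x \<partial>M)\<bar>
      = norm (\<integral>x. (f (\<phi> x) - p (\<phi> x)) * g x \<partial>M)"
    using int[OF f] int[OF p] by (simp add: left_diff_distrib)
  also have "\<dots> \<le> (\<integral>x. norm ((f (\<phi> x) - p (\<phi> x)) * g x) \<partial>M)"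
    by (rule integral_norm_bound)
  also have "\<dots> \<le> (\<integral>x. \<epsilon> * g x \<partial>M)"
  proof (rule integral_mono)
    show "integrable M (\<lambda>x. norm ((f (\<phi> x) - p (\<phi> x)) * g x))"
      using int[OF f] int[OF p] by (simp add: left_diff_distrib)
    show "norm ((f (\<phi> x) - p (\<phi> x)) * g x) \<le> \<epsilon> * g x" for x
      using close[OF \<phi>(2)] g(2) by (simp add: abs_mult mult_right_mono)
  qed (use g(1) in simp)
  finally show ?thesis by simp
qed

text \<open>Weierstrass approximation of \<open>f\<close> by polynomials, uniformly on \<open>[0, 1]\<close>.\<close>
lemma integral_continuous_comp_mult_tendsto:
  fixes \<phi> h :: "'a \<Rightarrow> real" and g :: "nat \<Rightarrow> 'a \<Rightarrow> real"
  assumes \<phi>: "\<phi> \<in> borel_measurable M" "\<And>x. \<phi> x \<in> {0..1}"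
    and nonneg: "\<And>n x. 0 \<le> g n x" "\<And>x. 0 \<le> h x"
    and int: "\<And>n k. integrable M (\<lambda>x. \<phi> x ^ k * g n x)" "\<And>k. integrable M (\<lambda>x. \<phi> x ^ k * h x)"
    and moments: "\<And>k. (\<lambda>n. \<integral>x. \<phi> x ^ k * g n x \<partial>M) \<longlonglongrightarrow> (\<integral>x. \<phi> x ^ k * h x \<partial>M)"
    and f: "continuous_on {0..1} f"
  shows "(\<lambda>n. \<integral>x. f (\<phi> x) * g n x \<partial>M) \<longlonglongrightarrow> (\<integral>x. f (\<phi> x) * h x \<partial>M)"
proof (rule metric_LIMSEQ_I)
  fix r :: real assume "0 < r"
  have int0: "integrable M (g n)" "integrable M h" for n
    using int(1)[where n=n and k=0] int(2)[of 0] by simp_all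
  have "Bseq (\<lambda>n. \<integral>x. g n x \<partial>M)"
    using moments[of 0] by (intro convergent_imp_Bseq convergentI) simp
  then obtain K where "0 < K" and K: "\<forall>n. norm (\<integral>x. g n x \<partial>M) \<le> K"
    by (rule BseqE)
  define K' where "K' = K + \<bar>\<integral>x. h x \<partial>M\<bar>"
  define \<epsilon> where "\<epsilon> = r / (4 * K')"
  have "0 < K'" using \<open>0 < K\<close> by (simp add: K'_def)
  then have "0 < \<epsilon>" "\<epsilon> * K' = r / 4" using \<open>0 < r\<close> by (simp_all add: \<epsilon>_def)
  obtain p where "real_polynomial_function p" and p: "\<And>y. y \<in> {0..1} \<Longrightarrow> \<bar>f y - p y\<bar> < \<epsilon>"
    using Stone_Weierstrass_real_polynomial_function[OF compact_Icc f \<open>0 < \<epsilon>\<close>] by blast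
  then obtain a N where p_eq: "p = (\<lambda>y. \<Sum>i\<le>N. a i * y ^ i)"
    unfolding real_polynomial_function_iff_sum by blast
  have pc: "continuous_on {0..1} p" unfolding p_eq by (intro continuous_intros)
  have "(\<lambda>n. \<integral>x. p (\<phi> x) * g n x \<partial>M) \<longlonglongrightarrow> (\<integral>x. p (\<phi> x) * h x \<partial>M)"
    unfolding p_eq integral_polynomial_comp_mult[OF int(1)] integral_polynomial_comp_mult[OF int(2)]
    by (intro tendsto_intros moments)
  then have "eventually (\<lambda>n. dist (\<integral>x. p (\<phi> x) * g n x \<partial>M) (\<integral>x. p (\<phi> x) * h x \<partial>M) < r / 2)
      sequentially"
    using \<open>0 < r\<close> by (intro tendstoD) simp_all
  then obtain n0 where n0: "\<And>n. n0 \<le> n \<Longrightarrow>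
      \<bar>(\<integral>x. p (\<phi> x) * g n x \<partial>M) - (\<integral>x. p (\<phi> x) * h x \<partial>M)\<bar> < r / 2"
    unfolding eventually_sequentially dist_real_def by blast
  have approx: "\<bar>(\<integral>x. f (\<phi> x) * w x \<partial>M) - (\<integral>x. p (\<phi> x) * w x \<partial>M)\<bar> \<le> r / 4"
    if "integrable M w" "\<And>x. 0 \<le> w x" "\<bar>\<integral>x. w x \<partial>M\<bar> \<le> K'" for w
  proof -
    have "\<bar>(\<integral>x. f (\<phi> x) * w x \<partial>M) - (\<integral>x. p (\<phi> x) * w x \<partial>M)\<bar> \<le> \<epsilon> * (\<integral>x. w x \<partial>M)"
      using p by (intro integral_continuous_comp_mult_diff_le[OF \<phi> f pc] that less_imp_le)
    also have "\<dots> \<le> \<epsilon> * K'" using that(3) \<open>0 < \<epsilon>\<close> by (intro mult_left_mono) auto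
    finally show ?thesis using \<open>\<epsilon> * K' = r / 4\<close> by simp
  qed
  have bdd: "\<bar>\<integral>x. g n x \<partial>M\<bar> \<le> K'" "\<bar>\<integral>x. h x \<partial>M\<bar> \<le> K'" for n
    using K[rule_format, of n] by (auto simp: K'_def)
  then have "dist (\<integral>x. f (\<phi> x) * g n x \<partial>M) (\<integral>x. f (\<phi> x) * h x \<partial>M) < r" if "n0 \<le> n" for n
    using approx[OF int0(1)[of n] nonneg(1)[of n] bdd(1)[of n]] approx[OF int0(2) nonneg(2) bdd(2)]
      n0[OF that]
    unfolding dist_real_def by linarith
  then show "\<exists>n0. \<forall>n\<ge>n0. dist (\<integral>x. f (\<phi> x) * g n x \<partial>M) (\<integral>x. f (\<phi> x) * h x \<partial>M) < r"
    by blast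
qed

lemma laplace_trace_tendsto_imp_integral_tendsto:
  assumes trs: "\<And>n. is_trace t0 (As n)" and tr: "is_trace t0 A" and q: "0 < q"
    and bdd: "(SUP n. laplace_trace t0 (As n) q) < \<infinity>"
    and lim: "(\<lambda>n. laplace_trace t0 (As n) q) \<longlonglongrightarrow> laplace_trace t0 A q"
  shows "\<And>n. integrable lborel (\<lambda>s. exp (- q * s) * trace_excess t0 (As n) s)"
    and "integrable lborel (\<lambda>s. exp (- q * s) * trace_excess t0 A s)"
    and "(\<lambda>n. \<integral>s. exp (- q * s) * trace_excess t0 (As n) s \<partial>lborel)
           \<longlonglongrightarrow> (\<integral>s. exp (- q * s) * trace_excess t0 A s \<partial>lborel)"
proof -
  have le_SUP: "laplace_trace t0 (As n) q \<le> (SUP n. laplace_trace t0 (As n) q)" for n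
    by (rule SUP_upper) simp
  then show int_n: "integrable lborel (\<lambda>s. exp (- q * s) * trace_excess t0 (As n) s)" for n
    using bdd by (intro integrable_laplace_trace[OF trs q]) (rule le_less_trans)
  have "laplace_trace t0 A q \<le> (SUP n. laplace_trace t0 (As n) q)"
    using lim by (rule LIMSEQ_le_const2) (intro exI[of _ 0] allI impI le_SUP)
  then show int: "integrable lborel (\<lambda>s. exp (- q * s) * trace_excess t0 A s)"
    using bdd by (intro integrable_laplace_trace[OF tr q]) (rule le_less_trans)
  let ?I = "\<lambda>n. \<integral>s. exp (- q * s) * trace_excess t0 (As n) s \<partial>lborel"
  let ?J = "\<integral>s. exp (- q * s) * trace_excess t0 A s \<partial>lborel"
  have "0 \<le> ?I n" "0 \<le> ?J" for n
    using trace_excess_nonneg[OF trs] trace_excess_nonneg[OF tr] by (simp_all add: integral_nonneg)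
  moreover have "(\<lambda>n. ennreal (q * ?I n)) \<longlonglongrightarrow> ennreal (q * ?J)"
    using lim by (simp add: laplace_trace_eq_integral[OF trs q int_n] laplace_trace_eq_integral[OF tr q int])
  ultimately have "(\<lambda>n. q * ?I n) \<longlonglongrightarrow> q * ?J"
    using q by (subst (asm) tendsto_ennreal_iff) auto
  from this tendsto_const have "(\<lambda>n. (q * ?I n) / q) \<longlonglongrightarrow> (q * ?J) / q"
    by (rule tendsto_divide) (use q in simp)
  then show "?I \<longlonglongrightarrow> ?J" using q by simp
qed

text \<open>The moments are taken in \<open>min 1 (exp (- s))\<close>, which stays in \<open>[0, 1]\<close> also for
  \<open>s < 0\<close>, where \<open>trace_excess\<close> vanishes.\<close>
lemma min_exp_power_mult_trace_excess:
  "min 1 (exp (- s)) ^ k * (exp (- q * s) * trace_excess t0 A s)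
     = exp (- (q + real k) * s) * trace_excess t0 A s"
proof (cases "0 < s")
  case True
  then have "min 1 (exp (- s)) ^ k * exp (- q * s) = exp (- (q + real k) * s)"
    by (simp add: algebra_simps flip: exp_of_nat_mult exp_add)
  then show ?thesis by (simp add: mult.assoc)
qed (simp add: trace_excess_def)

lemma tent_function_exists:
  fixes \<tau>1 \<tau>2 q :: real
  assumes "0 < \<tau>1" "\<tau>1 < \<tau>2" "0 < q"
  obtains f where "continuous_on {0..1} f" "\<And>x. 0 \<le> f x"
    and "\<And>s. 0 < s \<Longrightarrow> 0 < f (min 1 (exp (- s))) \<Longrightarrow> \<tau>1 < s \<and> s < \<tau>2"
    and "0 < (\<integral>s. f (min 1 (exp (- s))) * (indicator {0<..} s * exp (- q * s)) \<partial>lborel)"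
proof -
  define x1 x2 where "x1 = exp (- \<tau>2)" and "x2 = exp (- \<tau>1)"
  define \<delta> where "\<delta> = (x2 - x1) / 4"
  define f where "f x = max 0 (min (x - x1) (x2 - x))" for x
  define a b where "a = - ln (x2 - \<delta>)" and "b = - ln (x1 + \<delta>)"
  have x: "0 < x1" "x1 < x2" "x2 < 1" using assms by (simp_all add: x1_def x2_def)
  have \<delta>: "0 < \<delta>" "0 < x1 + \<delta>" "x1 + \<delta> < x2 - \<delta>" "x2 - \<delta> < 1"
    using x unfolding \<delta>_def by simp_all (simp_all add: field_simps)
  have ab: "0 < a" "a < b" using \<delta> by (simp_all add: a_def b_def)
  have supp: "\<tau>1 < s \<and> s < \<tau>2" if "0 < s" "0 < f (min 1 (exp (- s)))" for s
  proof -
    have "min 1 (exp (- s)) = exp (- s)" using that(1) by simp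
    then have "x1 < exp (- s)" "exp (- s) < x2" using that(2) by (simp_all add: f_def)
    then show ?thesis by (simp add: x1_def x2_def)
  qed
  have cont: "continuous_on {0..1} f" unfolding f_def by (intro continuous_intros)
  have f_nonneg: "0 \<le> f x" for x by (simp add: f_def)
  let ?w = "\<lambda>s. f (min 1 (exp (- s))) * (indicator {0<..} s * exp (- q * s))"
  have int: "integrable lborel ?w"
    using cont assms(3) by (intro integrable_continuous_comp_mult integrable_exp_decay) auto
  have low: "\<delta> * exp (- q * b) * indicator {a..b} s \<le> ?w s" for s
  proof (cases "s \<in> {a..b}")
    case True
    then have "0 < s" using ab by simp
    have "exp (- s) \<le> exp (- a)" "exp (- b) \<le> exp (- s)" using True by simp_all
    then have "x1 + \<delta> \<le> exp (- s)" "exp (- s) \<le> x2 - \<delta>" using \<delta> by (simp_all add: a_def b_def)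
    moreover have "min 1 (exp (- s)) = exp (- s)" using \<open>0 < s\<close> by simp
    ultimately have "\<delta> \<le> f (min 1 (exp (- s)))" unfolding f_def by simp
    moreover have "exp (- q * b) \<le> exp (- q * s)" using True assms(3) by simp
    ultimately show ?thesis using True \<open>0 < s\<close> \<delta> by (simp add: mult_mono)
  qed (use f_nonneg in simp)
  have "0 < \<delta> * exp (- q * b) * (b - a)" using \<delta> ab by simp
  also have "\<dots> = (\<integral>s. \<delta> * exp (- q * b) * indicator {a..b} s \<partial>lborel)"
    using ab by simp
  also have "\<dots> \<le> (\<integral>s. ?w s \<partial>lborel)"
    using int low less_imp_le[OF ab(2)] by (intro integral_mono) (auto intro!: integrable_real_indicator)
  finally show thesis using that cont f_nonneg supp by blast
qed

lemma trace_tent_integral_bounds: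
  fixes f :: "real \<Rightarrow> real"
  assumes tr: "is_trace t0 B" and "0 < \<tau>1"
    and f: "continuous_on {0..1} f" "\<And>x. 0 \<le> f x"
      "\<And>s. 0 < s \<Longrightarrow> 0 < f (min 1 (exp (- s))) \<Longrightarrow> \<tau>1 < s \<and> s < \<tau>2"
    and int: "integrable lborel (\<lambda>s. exp (- q * s) * trace_excess t0 B s)" and "0 < q"
  defines "W \<equiv> \<integral>s. f (min 1 (exp (- s))) * (indicator {0<..} s * exp (- q * s)) \<partial>lborel"
    and "I \<equiv> \<integral>s. f (min 1 (exp (- s))) * (exp (- q * s) * trace_excess t0 B s) \<partial>lborel"
  shows "(B \<tau>1 - ln t0) * W \<le> I" and "I \<le> (B \<tau>2 - ln t0) * W"
proof -
  let ?\<phi> = "\<lambda>s::real. min 1 (exp (- s))"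
  let ?w = "\<lambda>s. f (?\<phi> s) * (indicator {0<..} s * exp (- q * s))"
  let ?i = "\<lambda>s. f (?\<phi> s) * (exp (- q * s) * trace_excess t0 B s)"
  have \<phi>: "?\<phi> \<in> borel_measurable lborel" "\<And>s. ?\<phi> s \<in> {0..1}" by auto
  have int_i: "integrable lborel ?i"
    by (rule integrable_continuous_comp_mult[OF \<phi> f(1) int])
  have int_w: "integrable lborel ?w"
    using \<open>0 < q\<close> by (intro integrable_continuous_comp_mult[OF \<phi> f(1)] integrable_exp_decay)
  have bounds: "(B \<tau>1 - ln t0) * ?w s \<le> ?i s \<and> ?i s \<le> (B \<tau>2 - ln t0) * ?w s" for s
  proof (cases "0 < s \<and> 0 < f (?\<phi> s)")
    case True
    then have "B \<tau>1 - ln t0 \<le> B s - ln t0" "B s - ln t0 \<le> B \<tau>2 - ln t0"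
      using f(3)[of s] trace_mono[OF tr] \<open>0 < \<tau>1\<close> by auto
    moreover have "0 \<le> f (?\<phi> s) * exp (- q * s)" using f(2) by simp
    ultimately have "(B \<tau>1 - ln t0) * (f (?\<phi> s) * exp (- q * s)) \<le> (B s - ln t0) * (f (?\<phi> s) * exp (- q * s))"
      "(B s - ln t0) * (f (?\<phi> s) * exp (- q * s)) \<le> (B \<tau>2 - ln t0) * (f (?\<phi> s) * exp (- q * s))"
      by (simp_all add: mult_right_mono)
    then show ?thesis using True by (simp add: trace_excess_def mult_ac)
  next
    case False
    then have "s \<le> 0 \<or> f (?\<phi> s) = 0" using f(2)[of "?\<phi> s"] by argo
    then show ?thesis by (auto simp: trace_excess_def)
  qed
  have "(B \<tau>1 - ln t0) * W = (\<integral>s. (B \<tau>1 - ln t0) * ?w s \<partial>lborel)" by (simp add: W_def)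
  also have "\<dots> \<le> I" unfolding I_def using int_w int_i bounds by (intro integral_mono) auto
  finally show "(B \<tau>1 - ln t0) * W \<le> I" .
  have "I \<le> (\<integral>s. (B \<tau>2 - ln t0) * ?w s \<partial>lborel)" unfolding I_def
    using int_w int_i bounds by (intro integral_mono) auto
  also have "\<dots> = (B \<tau>2 - ln t0) * W" by (simp add: W_def)
  finally show "I \<le> (B \<tau>2 - ln t0) * W" .
qed

text \<open>The integrals against the tent converge by the moment lemma, and those of
  \<open>trace_excess t0 B\<close> lie between \<open>B \<tau>1 - ln t0\<close> and \<open>B \<tau>2 - ln t0\<close> times that of the tent.\<close>
lemma eventually_trace_bracket:
  assumes trs: "\<And>n. is_trace t0 (As n)" and tr: "is_trace t0 A" and "0 < q"
    and int_n: "\<And>n k. integrable lborel (\<lambda>s. exp (- (q + real k) * s) * trace_excess t0 (As n) s)"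
    and int: "\<And>k. integrable lborel (\<lambda>s. exp (- (q + real k) * s) * trace_excess t0 A s)"
    and lim: "\<And>k. (\<lambda>n. \<integral>s. exp (- (q + real k) * s) * trace_excess t0 (As n) s \<partial>lborel)
                    \<longlonglongrightarrow> (\<integral>s. exp (- (q + real k) * s) * trace_excess t0 A s \<partial>lborel)"
    and "0 < \<tau>1" "\<tau>1 < \<tau>2" "0 < \<epsilon>"
  shows "eventually (\<lambda>n. As n \<tau>1 < A \<tau>2 + \<epsilon> \<and> A \<tau>1 - \<epsilon> < As n \<tau>2) sequentially"
proof -
  let ?\<phi> = "\<lambda>s::real. min 1 (exp (- s))"
  obtain f where f: "continuous_on {0..1} f" "\<And>x. 0 \<le> f x"
      "\<And>s. 0 < s \<Longrightarrow> 0 < f (?\<phi> s) \<Longrightarrow> \<tau>1 < s \<and> s < \<tau>2"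
    and W_pos: "0 < (\<integral>s. f (?\<phi> s) * (indicator {0<..} s * exp (- q * s)) \<partial>lborel)"
    using tent_function_exists[OF \<open>0 < \<tau>1\<close> \<open>\<tau>1 < \<tau>2\<close> \<open>0 < q\<close>] by blast
  define W where "W = (\<integral>s. f (?\<phi> s) * (indicator {0<..} s * exp (- q * s)) \<partial>lborel)"
  have "0 < W" using W_pos by (simp add: W_def)
  define I where "I B = (\<integral>s. f (?\<phi> s) * (exp (- q * s) * trace_excess t0 B s) \<partial>lborel)" for B
  note power_eq = min_exp_power_mult_trace_excess
  have \<phi>: "?\<phi> \<in> borel_measurable lborel" "\<And>s. ?\<phi> s \<in> {0..1}" by auto
  have "(\<lambda>n. I (As n)) \<longlonglongrightarrow> I A"
    unfolding I_def
  proof (rule integral_continuous_comp_mult_tendsto[OF \<phi> _ _ _ _ _ f(1)])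
    show "\<And>n s. 0 \<le> exp (- q * s) * trace_excess t0 (As n) s"
      "\<And>s. 0 \<le> exp (- q * s) * trace_excess t0 A s"
      using trace_excess_nonneg[OF trs] trace_excess_nonneg[OF tr] by simp_all
  qed (simp_all only: power_eq int_n int lim)
  moreover have "0 < \<epsilon> * W" using \<open>0 < \<epsilon>\<close> \<open>0 < W\<close> by simp
  ultimately have "eventually (\<lambda>n. \<bar>I (As n) - I A\<bar> < \<epsilon> * W) sequentially"
    by (auto dest: tendstoD simp: dist_real_def)
  then show ?thesis
  proof (rule eventually_mono)
    fix n assume close: "\<bar>I (As n) - I A\<bar> < \<epsilon> * W"
    have "integrable lborel (\<lambda>s. exp (- q * s) * trace_excess t0 (As n) s)"
      "integrable lborel (\<lambda>s. exp (- q * s) * trace_excess t0 A s)"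
      using int_n[where n=n and k=0] int[of 0] by simp_all
    note bounds = trace_tent_integral_bounds[OF trs \<open>0 < \<tau>1\<close> f this(1) \<open>0 < q\<close>]
      trace_tent_integral_bounds[OF tr \<open>0 < \<tau>1\<close> f this(2) \<open>0 < q\<close>]
    have "(As n \<tau>1 - ln t0) * W < (A \<tau>2 - ln t0 + \<epsilon>) * W"
      "(A \<tau>1 - ln t0 - \<epsilon>) * W < (As n \<tau>2 - ln t0) * W"
      using bounds close unfolding W_def I_def by (simp_all add: algebra_simps abs_less_iff)
    then show "As n \<tau>1 < A \<tau>2 + \<epsilon> \<and> A \<tau>1 - \<epsilon> < As n \<tau>2"
      using \<open>0 < W\<close> by simp
  qed
qed

lemma trace_tendsto_at_isCont:
  assumes trs: "\<And>n. is_trace t0 (As n)" and tr: "is_trace t0 A" and "0 < q"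
    and int_n: "\<And>n k. integrable lborel (\<lambda>s. exp (- (q + real k) * s) * trace_excess t0 (As n) s)"
    and int: "\<And>k. integrable lborel (\<lambda>s. exp (- (q + real k) * s) * trace_excess t0 A s)"
    and lim: "\<And>k. (\<lambda>n. \<integral>s. exp (- (q + real k) * s) * trace_excess t0 (As n) s \<partial>lborel)
                    \<longlonglongrightarrow> (\<integral>s. exp (- (q + real k) * s) * trace_excess t0 A s \<partial>lborel)"
    and "0 < \<tau>" and cont: "isCont A \<tau>"
  shows "(\<lambda>n. As n \<tau>) \<longlonglongrightarrow> A \<tau>"
proof -
  note bracket = eventually_trace_bracket[OF trs tr \<open>0 < q\<close> int_n int lim]
  have near: "\<exists>d>0. \<forall>x. \<bar>x - \<tau>\<bar> < d \<longrightarrow> \<bar>A x - A \<tau>\<bar> < e" if "0 < e" for e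
    using cont that unfolding continuous_at_eps_delta dist_real_def by blast
  show ?thesis
  proof (rule order_tendstoI)
    fix a assume "a < A \<tau>"
    then obtain e where "0 < e" and a_eq: "a = A \<tau> - 3 * e"
      by (intro that[of "(A \<tau> - a) / 3"]) (auto simp: field_simps)
    then obtain d where "0 < d" and d: "\<And>x. \<bar>x - \<tau>\<bar> < d \<Longrightarrow> \<bar>A x - A \<tau>\<bar> < e"
      using near by blast
    define \<tau>1 where "\<tau>1 = \<tau> - min d \<tau> / 2"
    have "0 < \<tau>1" "\<tau>1 < \<tau>" "\<bar>\<tau>1 - \<tau>\<bar> < d" using \<open>0 < d\<close> \<open>0 < \<tau>\<close> by (auto simp: \<tau>1_def)
    then have "A \<tau> - e < A \<tau>1" using d[of \<tau>1] by (simp add: abs_less_iff)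
    with bracket[OF \<open>0 < \<tau>1\<close> \<open>\<tau>1 < \<tau>\<close> \<open>0 < e\<close>] show "eventually (\<lambda>n. a < As n \<tau>) sequentially"
      using \<open>0 < e\<close> a_eq by (elim eventually_mono conjE) linarith
  next
    fix b assume "A \<tau> < b"
    then obtain e where "0 < e" and b_eq: "b = A \<tau> + 3 * e"
      by (intro that[of "(b - A \<tau>) / 3"]) (auto simp: field_simps)
    then obtain d where "0 < d" and d: "\<And>x. \<bar>x - \<tau>\<bar> < d \<Longrightarrow> \<bar>A x - A \<tau>\<bar> < e"
      using near by blast
    define \<tau>2 where "\<tau>2 = \<tau> + d / 2"
    have "\<tau> < \<tau>2" "\<bar>\<tau>2 - \<tau>\<bar> < d" using \<open>0 < d\<close> by (auto simp: \<tau>2_def)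
    then have "A \<tau>2 < A \<tau> + e" using d[of \<tau>2] by (simp add: abs_less_iff)
    with bracket[OF \<open>0 < \<tau>\<close> \<open>\<tau> < \<tau>2\<close> \<open>0 < e\<close>] show "eventually (\<lambda>n. As n \<tau> < b) sequentially"
      using \<open>0 < e\<close> b_eq by (elim eventually_mono conjE) linarith
  qed
qed

section \<open>Convergence of min histories and of their traces\<close>

lemma mono_on_exists_isCont_between:
  fixes f :: "real \<Rightarrow> real"
  assumes "mono_on S f" "open S" "{a<..<b} \<subseteq> S" "a < b"
  obtains x where "a < x" "x < b" "isCont f x"
proof -
  have "countable {x\<in>S. \<not> isCont f x}" by (rule mono_on_ctble_discont_open[OF assms(2,1)])
  from open_minus_countable[OF this, of "{a<..<b}"] obtain x
    where "x \<in> {a<..<b}" "x \<notin> {x\<in>S. \<not> isCont f x}"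
    using assms(4) by auto
  then show thesis using that assms(3) by auto
qed

context
  fixes t0 :: real and l :: "real \<Rightarrow> real" and ls :: "nat \<Rightarrow> real \<Rightarrow> real"
  assumes mh: "min_history t0 l" and mhs: "\<And>n. min_history t0 (ls n)"
    and lim: "\<And>t. t0 < t \<Longrightarrow> isCont l t \<Longrightarrow> (\<lambda>n. ls n t) \<longlonglongrightarrow> l t"
begin

lemma eventually_l_dagger_less:
  assumes "l_dagger t0 l \<tau> < b"
  shows "eventually (\<lambda>n. l_dagger t0 (ls n) \<tau> < b) sequentially"
proof -
  have "{l_dagger t0 l \<tau><..<b} \<subseteq> {t0<..}" using t0_le_l_dagger[OF mh, of \<tau>] by auto
  then obtain t where t: "l_dagger t0 l \<tau> < t" "t < b" "isCont l t"
    using mono_on_exists_isCont_between[OF min_history_mono_on[OF mh] open_greaterThan _ assms] by blast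
  have "t0 < t" using t(1) t0_le_l_dagger[OF mh, of \<tau>] by simp
  have "\<tau> < l t" using l_dagger_less_imp_less[OF mh t(1)] .
  with lim[OF \<open>t0 < t\<close> t(3)] have "eventually (\<lambda>n. \<tau> < ls n t) sequentially"
    by (rule order_tendstoD)
  then show ?thesis
  proof (rule eventually_mono)
    fix n assume "\<tau> < ls n t"
    then have "l_dagger t0 (ls n) \<tau> \<le> t" using \<open>t0 < t\<close> by (intro l_dagger_le[OF mhs]) simp_all
    then show "l_dagger t0 (ls n) \<tau> < b" using t(2) by simp
  qed
qed

lemma eventually_less_l_dagger:
  assumes cont: "isCont (l_dagger t0 l) \<tau>" and "a < l_dagger t0 l \<tau>"
  shows "eventually (\<lambda>n. a < l_dagger t0 (ls n) \<tau>) sequentially"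
proof (cases "a < t0")
  case True
  then show ?thesis
    by (intro always_eventually allI less_le_trans[OF True t0_le_l_dagger[OF mhs]])
next
  case False
  then have "{a<..<l_dagger t0 l \<tau>} \<subseteq> {t0<..}" by auto
  then obtain t where t: "a < t" "t < l_dagger t0 l \<tau>" "isCont l t"
    using mono_on_exists_isCont_between[OF min_history_mono_on[OF mh] open_greaterThan _ assms(2)]
    by blast
  have "t0 < t" using t(1) False by simp
  obtain d where "0 < d" and d: "\<And>x. \<bar>x - \<tau>\<bar> < d \<Longrightarrow> \<bar>l_dagger t0 l x - l_dagger t0 l \<tau>\<bar> < l_dagger t0 l \<tau> - t"
    using cont t(2) unfolding continuous_at_eps_delta dist_real_def by (meson diff_gt_0_iff_gt)
  then have "t < l_dagger t0 l (\<tau> - d / 2)" using d[of "\<tau> - d / 2"] by (simp add: abs_less_iff)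
  have "\<tau> - d / 2 < \<tau>" using \<open>0 < d\<close> by simp
  then have "l t < \<tau>"
    using l_dagger_le[OF mh, of t "\<tau> - d / 2"] \<open>t0 < t\<close> \<open>t < l_dagger t0 l (\<tau> - d / 2)\<close>
    by (cases "\<tau> - d / 2 < l t") auto
  with lim[OF \<open>t0 < t\<close> t(3)] have "eventually (\<lambda>n. ls n t < \<tau>) sequentially"
    by (rule order_tendstoD)
  then show ?thesis
  proof (rule eventually_mono)
    fix n assume "ls n t < \<tau>"
    then have "t \<le> l_dagger t0 (ls n) \<tau>" using \<open>t0 < t\<close> by (intro le_l_dagger[OF mhs]) simp_all
    then show "a < l_dagger t0 (ls n) \<tau>" using t(1) by simp
  qed
qed

lemma trace_of_tendsto_at_isCont:
  assumes "0 < t0" and cont: "isCont (trace_of t0 l) \<tau>"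
  shows "(\<lambda>n. trace_of t0 (ls n) \<tau>) \<longlonglongrightarrow> trace_of t0 l \<tau>"
proof -
  have "isCont (\<lambda>x. exp (trace_of t0 l x)) \<tau>" using cont by (intro continuous_intros)
  then have "isCont (l_dagger t0 l) \<tau>" using exp_trace_of[OF mh \<open>0 < t0\<close>] by simp
  then have "(\<lambda>n. l_dagger t0 (ls n) \<tau>) \<longlonglongrightarrow> l_dagger t0 l \<tau>"
    by (intro order_tendstoI eventually_less_l_dagger eventually_l_dagger_less)
  then have "(\<lambda>n. ln (l_dagger t0 (ls n) \<tau>)) \<longlonglongrightarrow> ln (l_dagger t0 l \<tau>)"
    by (rule tendsto_ln) (use t0_le_l_dagger[OF mh, of \<tau>] \<open>0 < t0\<close> in simp)
  then show ?thesis by (simp add: trace_of_def)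
qed

end

context
  fixes t0 :: real and A l :: "real \<Rightarrow> real" and ls :: "nat \<Rightarrow> real \<Rightarrow> real"
  assumes "0 < t0" and tr: "is_trace t0 A" and mhs: "\<And>n. min_history t0 (ls n)"
    and l_eq: "\<And>t. t0 \<le> t \<Longrightarrow> min_history_of A t = l t"
    and lim: "\<And>\<tau>. 0 < \<tau> \<Longrightarrow> isCont A \<tau> \<Longrightarrow> (\<lambda>n. trace_of t0 (ls n) \<tau>) \<longlonglongrightarrow> A \<tau>"
begin

lemma eventually_min_history_less:
  assumes "t0 < t" "l t < b"
  shows "eventually (\<lambda>n. ls n t < b) sequentially"
proof -
  have "0 < l t" using min_history_of_pos[OF tr \<open>0 < t0\<close> assms(1)] l_eq assms(1) by simp
  then have "{l t<..<b} \<subseteq> {0<..}" by auto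
  then obtain \<tau> where \<tau>: "l t < \<tau>" "\<tau> < b" "isCont A \<tau>"
    using mono_on_exists_isCont_between[OF trace_mono_on[OF tr] open_greaterThan _ assms(2)] by blast
  have "t < exp (A \<tau>)" "0 < \<tau>"
    using min_history_of_less_imp[OF tr, of t \<tau>] l_eq[of t] assms(1) \<tau>(1) by simp_all
  then have "ln t < A \<tau>" using ln_less_cancel_iff[of t "exp (A \<tau>)"] \<open>0 < t0\<close> assms(1) by simp
  with lim[OF \<open>0 < \<tau>\<close> \<tau>(3)] have "eventually (\<lambda>n. ln t < trace_of t0 (ls n) \<tau>) sequentially"
    by (rule order_tendstoD)
  then show ?thesis
  proof (rule eventually_mono)
    fix n assume "ln t < trace_of t0 (ls n) \<tau>"
    then have "exp (ln t) < exp (trace_of t0 (ls n) \<tau>)" by (rule exp_less_mono)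
    then have "t < l_dagger t0 (ls n) \<tau>"
      using exp_trace_of[OF mhs \<open>0 < t0\<close>] \<open>0 < t0\<close> assms(1) by simp
    then have "ls n t \<le> \<tau>"
      using l_dagger_le[OF mhs less_imp_le[OF assms(1)], of \<tau> n] by (cases "\<tau> < ls n t") auto
    then show "ls n t < b" using \<tau>(2) by simp
  qed
qed

lemma eventually_less_min_history:
  assumes "t0 < t" and cont: "isCont l t" and "a < l t"
  shows "eventually (\<lambda>n. a < ls n t) sequentially"
proof (cases "a \<le> 0")
  case True
  then show ?thesis
    using assms(1) by (intro always_eventually allI le_less_trans[OF True min_history_pos[OF mhs]]) simp
next
  case False
  then have "{a<..<l t} \<subseteq> {0<..}" by auto
  then obtain \<tau> where \<tau>: "a < \<tau>" "\<tau> < l t" "isCont A \<tau>"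
    using mono_on_exists_isCont_between[OF trace_mono_on[OF tr] open_greaterThan _ assms(3)] by blast
  obtain d where "0 < d" and d: "\<And>x. \<bar>x - t\<bar> < d \<Longrightarrow> \<bar>l x - l t\<bar> < l t - \<tau>"
    using cont \<tau>(2) unfolding continuous_at_eps_delta dist_real_def by (meson diff_gt_0_iff_gt)
  define \<mu> where "\<mu> = min d (t - t0)"
  have "0 < \<mu>" "\<mu> \<le> d" "\<mu> \<le> t - t0" using \<open>0 < d\<close> assms(1) by (auto simp: \<mu>_def)
  define t' where "t' = t - \<mu> / 2"
  have "t0 < t'" "t' < t" "\<bar>t' - t\<bar> < d" using \<open>0 < \<mu>\<close> \<open>\<mu> \<le> d\<close> \<open>\<mu> \<le> t - t0\<close> by (auto simp: t'_def)
  then have "\<tau> < l t'" using d[of t'] by (simp add: abs_less_iff)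
  then have "exp (A \<tau>) \<le> t'"
    using min_history_of_le[of \<tau> t' A] l_eq[of t'] \<open>t0 < t'\<close> \<tau>(1) False by force
  then have "A \<tau> < ln t"
    using ln_less_cancel_iff[of "exp (A \<tau>)" t] \<open>t' < t\<close> \<open>0 < t0\<close> \<open>t0 < t'\<close> by simp
  with lim[of \<tau>] \<tau> False have "eventually (\<lambda>n. trace_of t0 (ls n) \<tau> < ln t) sequentially"
    by (intro order_tendstoD) simp_all
  then show ?thesis
  proof (rule eventually_mono)
    fix n assume "trace_of t0 (ls n) \<tau> < ln t"
    then have "exp (trace_of t0 (ls n) \<tau>) < exp (ln t)" by (rule exp_less_mono)
    then have "l_dagger t0 (ls n) \<tau> < t"
      using exp_trace_of[OF mhs \<open>0 < t0\<close>] \<open>0 < t0\<close> assms(1) by simp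
    then show "a < ls n t" using l_dagger_less_imp_less[OF mhs] \<tau>(1) by (meson less_trans)
  qed
qed

lemma min_history_tendsto_at_isCont:
  assumes "t0 < t" "isCont l t"
  shows "(\<lambda>n. ls n t) \<longlonglongrightarrow> l t"
  using assms by (intro order_tendstoI eventually_less_min_history eventually_min_history_less)

end

section \<open>The equivalence\<close>

lemma laplace_tendsto_if_min_history_tendsto:
  assumes "0 < t0" "0 \<le> c" and mh: "min_history t0 l" and mhs: "\<And>n. min_history t0 (ls n)"
    and bdd: "\<forall>q>c. (SUP n. laplace_trace t0 (trace_of t0 (ls n)) q) < \<infinity>"
    and lim: "\<forall>t>t0. isCont l t \<longrightarrow> (\<lambda>n. ls n t) \<longlonglongrightarrow> l t"
    and "c < q"
  shows "(\<lambda>n. laplace_trace t0 (trace_of t0 (ls n)) q) \<longlonglongrightarrow> laplace_trace t0 (trace_of t0 l) q"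
proof (rule laplace_trace_tendsto)
  show "is_trace t0 (trace_of t0 (ls n))" "is_trace t0 (trace_of t0 l)" for n
    using trace_of_is_trace[OF mhs \<open>0 < t0\<close>] trace_of_is_trace[OF mh \<open>0 < t0\<close>] by auto
  show "(\<lambda>n. trace_of t0 (ls n) \<tau>) \<longlonglongrightarrow> trace_of t0 l \<tau>" if "isCont (trace_of t0 l) \<tau>" for \<tau>
    using lim by (intro trace_of_tendsto_at_isCont[OF mh mhs _ \<open>0 < t0\<close> that]) simp
  show "0 < (q + c) / 2" "(q + c) / 2 < q" using \<open>0 \<le> c\<close> \<open>c < q\<close> by simp_all
  show "(SUP n. laplace_trace t0 (trace_of t0 (ls n)) ((q + c) / 2)) < \<infinity>"
    using bdd \<open>c < q\<close> by simp
qed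

lemma min_history_tendsto_if_laplace_tendsto:
  assumes "0 < t0" "0 \<le> c" and tr: "is_trace t0 A" and mhs: "\<And>n. min_history t0 (ls n)"
    and l_eq: "\<forall>t\<ge>t0. min_history_of A t = l t"
    and bdd: "\<forall>q>c. (SUP n. laplace_trace t0 (trace_of t0 (ls n)) q) < \<infinity>"
    and lim: "\<forall>q>c. (\<lambda>n. laplace_trace t0 (trace_of t0 (ls n)) q) \<longlonglongrightarrow> laplace_trace t0 A q"
    and "t0 < t" "isCont l t"
  shows "(\<lambda>n. ls n t) \<longlonglongrightarrow> l t"
proof -
  have trs: "is_trace t0 (trace_of t0 (ls n))" for n
    using trace_of_is_trace[OF mhs \<open>0 < t0\<close>] .
  define q where "q = c + 1"
  have "0 < q" using \<open>0 \<le> c\<close> by (simp add: q_def)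
  have "c < q + real k" for k using \<open>0 \<le> c\<close> by (simp add: q_def)
  then have "(SUP n. laplace_trace t0 (trace_of t0 (ls n)) (q + real k)) < \<infinity>"
    "(\<lambda>n. laplace_trace t0 (trace_of t0 (ls n)) (q + real k)) \<longlonglongrightarrow> laplace_trace t0 A (q + real k)"
    for k using bdd lim by blast+
  note moments = laplace_trace_tendsto_imp_integral_tendsto[OF trs tr _ this]
  have traces_lim: "(\<lambda>n. trace_of t0 (ls n) \<tau>) \<longlonglongrightarrow> A \<tau>" if "0 < \<tau>" "isCont A \<tau>" for \<tau>
    using \<open>0 < q\<close> by (intro trace_tendsto_at_isCont[OF trs tr \<open>0 < q\<close> moments that]) simp_all
  have "min_history_of A t = l t" if "t0 \<le> t" for t
    using l_eq that by blast
  from min_history_tendsto_at_isCont[OF \<open>0 < t0\<close> tr mhs this traces_lim \<open>t0 < t\<close> \<open>isCont l t\<close>]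
  show ?thesis .
qed

theorem theorem3p4:
  fixes t0 c :: real and ls :: "nat \<Rightarrow> real \<Rightarrow> real"
  assumes "t0 > 0" and "c \<ge> 0"
    and "\<forall>n. min_history t0 (ls n)"
    and "\<forall>q>c. (SUP n. laplace_trace t0 (trace_of t0 (ls n)) q) < \<infinity>"
  shows "\<forall>l. min_history t0 l \<longrightarrow>
           ((\<forall>t>t0. isCont l t \<longrightarrow> (\<lambda>n. ls n t) \<longlonglongrightarrow> l t) \<longleftrightarrow>
            (\<exists>A. is_trace t0 A \<and> (\<forall>t\<ge>t0. min_history_of A t = l t) \<and>
                 (\<forall>q>c. (\<lambda>n. laplace_trace t0 (trace_of t0 (ls n)) q)
                          \<longlonglongrightarrow> laplace_trace t0 A q)))"
proof (intro allI impI)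
  fix l assume mh: "min_history t0 l"
  have mhs: "\<And>n. min_history t0 (ls n)" using assms(3) by blast
  show "(\<forall>t>t0. isCont l t \<longrightarrow> (\<lambda>n. ls n t) \<longlonglongrightarrow> l t) \<longleftrightarrow>
      (\<exists>A. is_trace t0 A \<and> (\<forall>t\<ge>t0. min_history_of A t = l t) \<and>
        (\<forall>q>c. (\<lambda>n. laplace_trace t0 (trace_of t0 (ls n)) q) \<longlonglongrightarrow> laplace_trace t0 A q))"
  proof
    assume lim: "\<forall>t>t0. isCont l t \<longrightarrow> (\<lambda>n. ls n t) \<longlonglongrightarrow> l t"
    show "\<exists>A. is_trace t0 A \<and> (\<forall>t\<ge>t0. min_history_of A t = l t) \<and>
        (\<forall>q>c. (\<lambda>n. laplace_trace t0 (trace_of t0 (ls n)) q) \<longlonglongrightarrow> laplace_trace t0 A q)"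
    proof (intro exI[of _ "trace_of t0 l"] conjI allI impI)
      show "is_trace t0 (trace_of t0 l)" by (rule trace_of_is_trace[OF mh assms(1)])
      show "min_history_of (trace_of t0 l) t = l t" if "t0 \<le> t" for t
        by (rule min_history_of_trace_of[OF mh assms(1) that])
      show "(\<lambda>n. laplace_trace t0 (trace_of t0 (ls n)) q) \<longlonglongrightarrow> laplace_trace t0 (trace_of t0 l) q"
        if "c < q" for q
        by (rule laplace_tendsto_if_min_history_tendsto[OF assms(1,2) mh mhs assms(4) lim that])
    qed
  next
    assume "\<exists>A. is_trace t0 A \<and> (\<forall>t\<ge>t0. min_history_of A t = l t) \<and>
        (\<forall>q>c. (\<lambda>n. laplace_trace t0 (trace_of t0 (ls n)) q) \<longlonglongrightarrow> laplace_trace t0 A q)"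
    then obtain A where "is_trace t0 A" "\<forall>t\<ge>t0. min_history_of A t = l t"
      "\<forall>q>c. (\<lambda>n. laplace_trace t0 (trace_of t0 (ls n)) q) \<longlonglongrightarrow> laplace_trace t0 A q"
      by blast
    note A = this
    show "\<forall>t>t0. isCont l t \<longrightarrow> (\<lambda>n. ls n t) \<longlonglongrightarrow> l t"
      using min_history_tendsto_if_laplace_tendsto[OF assms(1,2) A(1) mhs A(2) assms(4) A(3)] by simp
  qed
qed

end
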